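(* Consider the Markov chain $\mathcal{G}$ described in the context, with parameters $r\ge1$, $p_c,p_1,\ldots,p_r\in[0,1]$. Assume $p_c<1$ and $p_c\cdot r\cdot\max\{p_1,\ldots,p_r\}<1$. Then for every block $\alpha\in\{1,\ldots,r\}^*$, $$\mathbb{E}[O(s_1^\alpha)]=\frac{\sum_{i=1}^r p_i}{1-p_c\sum_{i=1}^r p_i}\qquad\text{and}\qquad \mathbb{E}[N(s_1^\alpha)]=\frac{r+\sum_{i=1}^r p_i}{1-p_c\sum_{i=1}^r p_i}.$$
   Context: Fix an integer $r\ge 1$ and probabilities $p_c,p_1,\ldots,p_r\in[0,1]$. Words $\alpha\in\{1,\ldots,r\}^*$ (finite sequences, $\varepsilon$ the empty word, $\alpha\cdot i$ concatenation, $r^k$ the word of $k$ letters $r$) are called blocks. The Markov chain $\mathcal{G}$ has the countable state space $\{s_i^\alpha, c_i^\alpha : 1\le i\le r,\ \alpha\in\{1,\ldots,r\}^*\}\cup\{\sharp,\bot\}$, initial state $\sharp$, and the following transition probabilities (all unlisted transitions have probability $0$): $p(\sharp,s_1^\varepsilon)=p_c$, $p(\sharp,\bot)=1-p_c$; $p(s_i^\alpha,c_i^\alpha)=p_i$ for $1\le i\le r$; $p(s_i^\alpha,s_{i+1}^\alpha)=1-p_i$ for $1\le i<r$; $p(c_i^\alpha,s_1^{\alpha\cdot i})=p_c$ for $1\le i\le r$; $p(c_i^\alpha,s_{i+1}^\alpha)=1-p_c$ for $1\le i<r$; for every word of the form $\gamma=\beta\cdot i\cdot r^k$ with $1\le i<r$,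 $k\ge 0$: $p(s_r^{\gamma},s_{i+1}^\beta)=1-p_r$ and $p(c_r^{\gamma},s_{i+1}^\beta)=1-p_c$; for every $\gamma\in r^*$ (including $\varepsilon$): $p(s_r^\gamma,\bot)=1-p_r$, $p(c_r^\gamma,\bot)=1-p_c$; and $p(\bot,\bot)=1$. The block of $s_i^\alpha$ and of $c_i^\alpha$ is $\alpha$. The output states are the states $c_i^\beta$ (and $\sharp$). For a block $\alpha$ let $E_\alpha=\{s_j^\beta : 1\le j\le r,\ \beta\text{ a proper prefix of }\alpha\}\cup\{\bot\}$. For a state $s$ with block $\alpha$ and the chain $(X_n)$ started at $X_0=s$: $N(s)=\inf\{n\ge0 : X_n\in E_\alpha\}$ is the number of states visited before $E_\alpha$ is first reached, and $O(s)$ is the number of indices $0\le n< N(s)$ such that $X_n$ is an output state (the number of output states visited from $s$ before the block of $s$ is left upward). *)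

theory Defs
  imports "HOL-Probability.Probability" "HOL-Library.Sublist"
begin

text \<open>States of the chain G.  S i a is s_i^a, C i a is c_i^a (blocks are
  lists over {1..r}, concatenation a.i is a @ [i]); Sharp is the initial
  state, Bot the absorbing state.\<close>
datatype state = Sharp | Bot | S nat "nat list" | C nat "nat list"

text \<open>Leaving block g upward from s_r^g or c_r^g: if g = b @ [i] @ r^k with
  i < r, go to s_(i+1)^b; if g consists only of letters r, go to Bot.\<close>
definition exit_state :: "nat \<Rightarrow> nat list \<Rightarrow> state" where
  "exit_state r g =
     (let g' = rev (dropWhile (\<lambda>x. x = r) (rev g))
      in if g' = [] then Bot else S (last g' + 1) (butlast g'))"

text \<open>Transition kernel of G (parameters r, p_c, p_1..p_r).  Transitions of
  states with an index outside {1..r} (not part of the state space) are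
  set to Bot; they are unreachable.\<close>
fun kern :: "nat \<Rightarrow> real \<Rightarrow> (nat \<Rightarrow> real) \<Rightarrow> state \<Rightarrow> state pmf" where
  "kern r pc p Sharp = map_pmf (\<lambda>b. if b then S 1 [] else Bot) (bernoulli_pmf pc)"
| "kern r pc p Bot = return_pmf Bot"
| "kern r pc p (S i a) =
     (if 1 \<le> i \<and> i \<le> r then
        map_pmf (\<lambda>b. if b then C i a
                     else if i < r then S (i + 1) a else exit_state r a)
                (bernoulli_pmf (p i))
      else return_pmf Bot)"
| "kern r pc p (C i a) =
     (if 1 \<le> i \<and> i \<le> r then
        map_pmf (\<lambda>b. if b then S 1 (a @ [i])
                     else if i < r then S (i + 1) a else exit_state r a)
                (bernoulli_pmf pc)
      else return_pmf Bot)"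

primrec path :: "(state \<Rightarrow> state pmf) \<Rightarrow> nat \<Rightarrow> state \<Rightarrow> state list pmf" where
  "path K 0 s = return_pmf [s]"
| "path K (Suc n) s = K s \<bind> (\<lambda>t. map_pmf (Cons s) (path K n t))"

fun block_of :: "state \<Rightarrow> nat list" where
  "block_of (S i a) = a"
| "block_of (C i a) = a"
| "block_of Sharp = []"
| "block_of Bot = []"

fun is_output :: "state \<Rightarrow> bool" where
  "is_output (C i a) = True"
| "is_output Sharp = True"
| "is_output _ = False"

definition exitset :: "nat \<Rightarrow> nat list \<Rightarrow> state set" where
  "exitset r a = {S j b | j b. 1 \<le> j \<and> j \<le> r \<and> strict_prefix b a} \<union> {Bot}"

text \<open>On the first n+1 states, the quantities
  below compute min(N, n+1) and the number of output states among X_k with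
  k < min(N, n+1); these increase to N and O, so by monotone convergence the
  supremum of their expectations is E[N(s)] resp. E[O(s)] (possibly infinite).\<close>
definition ExpN :: "nat \<Rightarrow> real \<Rightarrow> (nat \<Rightarrow> real) \<Rightarrow> state \<Rightarrow> ennreal" where
  "ExpN r pc p s = (SUP n. \<integral>\<^sup>+ xs. ennreal (real (length
        (takeWhile (\<lambda>x. x \<notin> exitset r (block_of s)) xs))) \<partial>measure_pmf (path (kern r pc p) n s))"

definition ExpO :: "nat \<Rightarrow> real \<Rightarrow> (nat \<Rightarrow> real) \<Rightarrow> state \<Rightarrow> ennreal" where
  "ExpO r pc p s = (SUP n. \<integral>\<^sup>+ xs. ennreal (real (length (filter is_output
        (takeWhile (\<lambda>x. x \<notin> exitset r (block_of s)) xs)))) \<partial>measure_pmf (path (kern r pc p) n s))"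

end

theory Submission
  imports Defs
begin

text \<open>Give every state a weight (1 for all states when counting N, 1 for the states c and 0 for
  the states s when counting O). The expected weight collected before leaving the block of a is
  the least nonnegative solution V of the Bellman equation V = w + P V of the chain killed on E_a,
  and the difference between V and its n-step truncation is the tail P^(n+1) V. An explicit
  solution is available: one traversal of a block collects in expectation
  Phi = (w_s r + p_1 + ... + p_r) / (1 - p_c (p_1 + ... + p_r)), since its r slots contribute
  w_s + p_i (1 + p_c Phi) each, and a state deep in the tree of blocks below a still owes the rest
  of its own block and of every unfinished ancestor block. The tail of this solution vanishes by a
  second-moment bound: if U is the solution for N, whose value changes by at most J = 1 + Phi in
  one step, then U^2 + J^2 U is a finite supersolution, so the series of the P^n U converges.\<close>

definition killed_step :: "('a \<Rightarrow> 'a pmf) \<Rightarrow> 'a set \<Rightarrow> ('a \<Rightarrow> ennreal) \<Rightarrow> 'a \<Rightarrow> ennreal" where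
  "killed_step K E f s = (if s \<in> E then 0 else \<integral>\<^sup>+t. f t \<partial>K s)"

definition weight_before :: "'a set \<Rightarrow> ('a \<Rightarrow> ennreal) \<Rightarrow> 'a list \<Rightarrow> ennreal" where
  "weight_before E w xs = (\<Sum>x\<leftarrow>takeWhile (\<lambda>x. x \<notin> E) xs. w x)"

definition expected_weight_upto ::
    "(state \<Rightarrow> state pmf) \<Rightarrow> state set \<Rightarrow> (state \<Rightarrow> ennreal) \<Rightarrow> nat \<Rightarrow> state \<Rightarrow> ennreal" where
  "expected_weight_upto K E w n s = (\<integral>\<^sup>+xs. weight_before E w xs \<partial>path K n s)"

lemma ennreal_length_eq_sum_list: "ennreal (real (length xs)) = (\<Sum>x\<leftarrow>xs. 1)"
  by (induction xs) simp_all

lemma killed_step_add: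
  "killed_step K E (\<lambda>t. f t + g t) s = killed_step K E f s + killed_step K E g s"
  by (simp add: killed_step_def nn_integral_add)

lemma killed_step_sum:
  "killed_step K E (\<lambda>t. \<Sum>k\<in>A. f k t) s = (\<Sum>k\<in>A. killed_step K E (f k) s)"
  by (simp add: killed_step_def nn_integral_sum)

lemma killed_step_mono_on:
  assumes "s \<notin> E \<Longrightarrow> set_pmf (K s) \<subseteq> G" and "\<And>t. t \<in> G \<Longrightarrow> f t \<le> g t"
  shows "killed_step K E f s \<le> killed_step K E g s"
  using assms unfolding killed_step_def by (auto intro!: nn_integral_mono_AE AE_pmfI)

lemma killed_step_cong_on:
  assumes "s \<notin> E \<Longrightarrow> set_pmf (K s) \<subseteq> G" and "\<And>t. t \<in> G \<Longrightarrow> f t = g t"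
  shows "killed_step K E f s = killed_step K E g s"
  using assms unfolding killed_step_def by (auto intro!: nn_integral_cong_AE AE_pmfI)

lemma expected_weight_upto_0:
  "expected_weight_upto K E w 0 s = (if s \<in> E then 0 else w s)"
  by (simp add: expected_weight_upto_def weight_before_def)

lemma expected_weight_upto_Suc:
  "expected_weight_upto K E w (Suc n) s =
     (if s \<in> E then 0 else w s) + killed_step K E (expected_weight_upto K E w n) s"
proof (cases "s \<in> E")
  case True
  then show ?thesis
    by (simp add: expected_weight_upto_def weight_before_def killed_step_def)
next
  case False
  then have "expected_weight_upto K E w (Suc n) s
      = (\<integral>\<^sup>+t. (\<integral>\<^sup>+xs. w s + weight_before E w xs \<partial>path K n t) \<partial>K s)"
    by (simp add: expected_weight_upto_def weight_before_def)
  also have "\<dots> = (\<integral>\<^sup>+t. w s + expected_weight_upto K E w n t \<partial>K s)"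
    by (simp add: expected_weight_upto_def nn_integral_add measure_pmf.emeasure_space_1)
  also have "\<dots> = w s + killed_step K E (expected_weight_upto K E w n) s"
    using False by (simp add: killed_step_def nn_integral_add measure_pmf.emeasure_space_1)
  finally show ?thesis using False by simp
qed

lemma ennreal_tendsto_0_if_partial_sums_bounded:
  fixes f :: "nat \<Rightarrow> ennreal"
  assumes bounded: "\<And>n. (\<Sum>k<n. f k) \<le> B" and "B < \<top>"
  shows "f \<longlonglongrightarrow> 0"
proof -
  have "f k \<le> (\<Sum>k<Suc k. f k)" for k
    by (rule member_le_sum) auto
  then have "f k \<le> B" for k
    using bounded order.trans by blast
  then have finite: "f k < \<top>" for k
    using \<open>B < \<top>\<close> order.strict_trans1 by blast
  define g where "g k = enn2real (f k)" for k
  have f_eq: "f = (\<lambda>k. ennreal (g k))"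
    using finite by (simp add: g_def fun_eq_iff)
  have g_nonneg: "0 \<le> g k" for k
    by (simp add: g_def)
  have "summable g"
  proof (rule summableI_nonneg_bounded)
    fix n
    have "ennreal (\<Sum>k<n. g k) \<le> B"
      using bounded[of n] unfolding f_eq by (simp add: g_nonneg)
    from enn2real_mono[OF this \<open>B < \<top>\<close>]
    show "(\<Sum>k<n. g k) \<le> enn2real B"
      by (simp add: g_nonneg sum_nonneg)
  qed (rule g_nonneg)
  then have "g \<longlonglongrightarrow> 0" by (rule summable_LIMSEQ_zero)
  then have "(\<lambda>k. ennreal (g k)) \<longlonglongrightarrow> ennreal 0"
    by (rule tendsto_ennrealI)
  then show ?thesis unfolding f_eq by simp
qed

lemma killed_step_pow_tendsto_0:
  fixes K :: "'a \<Rightarrow> 'a pmf"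
  assumes closed: "\<And>s. s \<in> G \<Longrightarrow> s \<notin> E \<Longrightarrow> set_pmf (K s) \<subseteq> G"
    and super: "\<And>s. s \<in> G \<Longrightarrow> V s + killed_step K E Q s \<le> Q s"
    and finite: "\<And>s. s \<in> G \<Longrightarrow> Q s < \<top>"
    and "s \<in> G"
  shows "(\<lambda>n. (killed_step K E ^^ n) V s) \<longlonglongrightarrow> 0"
proof -
  have "(\<Sum>k<n. (killed_step K E ^^ k) V s) \<le> Q s" if "s \<in> G" for n s
    using that
  proof (induction n arbitrary: s)
    case 0
    then show ?case by simp
  next
    case (Suc n)
    have "(\<Sum>k<Suc n. (killed_step K E ^^ k) V s)
        = V s + killed_step K E (\<lambda>t. \<Sum>k<n. (killed_step K E ^^ k) V t) s"
      by (simp add: sum.lessThan_Suc_shift killed_step_sum del: sum.lessThan_Suc)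
    also have "\<dots> \<le> V s + killed_step K E Q s"
      using Suc closed by (intro add_left_mono killed_step_mono_on[where G = G]) auto
    also have "\<dots> \<le> Q s"
      using super Suc.prems .
    finally show ?case .
  qed
  then show ?thesis
    using finite \<open>s \<in> G\<close> by (intro ennreal_tendsto_0_if_partial_sums_bounded[where B = "Q s"])
qed

context
  fixes K :: "state \<Rightarrow> state pmf" and E G :: "state set" and w V :: "state \<Rightarrow> ennreal"
  assumes closed: "\<And>s. s \<in> G \<Longrightarrow> s \<notin> E \<Longrightarrow> set_pmf (K s) \<subseteq> G"
    and harmonic: "\<And>s. s \<in> G \<Longrightarrow> V s = (if s \<in> E then 0 else w s) + killed_step K E V s"
begin

lemma expected_weight_upto_add_tail:
  "s \<in> G \<Longrightarrow> expected_weight_upto K E w n s + (killed_step K E ^^ Suc n) V s = V s"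
proof (induction n arbitrary: s)
  case 0
  then show ?case
    using harmonic by (simp add: expected_weight_upto_0)
next
  case (Suc n)
  have "expected_weight_upto K E w (Suc n) s + (killed_step K E ^^ Suc (Suc n)) V s
      = (if s \<in> E then 0 else w s) + killed_step K E
          (\<lambda>t. expected_weight_upto K E w n t + (killed_step K E ^^ Suc n) V t) s"
    by (simp add: expected_weight_upto_Suc killed_step_add add.assoc)
  also have "\<dots> = (if s \<in> E then 0 else w s) + killed_step K E V s"
    using Suc closed by (intro arg_cong[where f = "\<lambda>x. _ + x"] killed_step_cong_on[where G = G]) auto
  also have "\<dots> = V s"
    by (rule harmonic[OF Suc.prems, symmetric])
  finally show ?case .
qed

lemma SUP_expected_weight_upto_eq:
  assumes "s \<in> G" and tail: "(\<lambda>n. (killed_step K E ^^ n) V s) \<longlonglongrightarrow> 0"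
  shows "(SUP n. expected_weight_upto K E w n s) = V s"
proof (rule order.antisym)
  note decomp = expected_weight_upto_add_tail[OF \<open>s \<in> G\<close>]
  show "(SUP n. expected_weight_upto K E w n s) \<le> V s"
    by (rule SUP_least) (metis decomp le_iff_add)
  have "V s \<le> (SUP n. expected_weight_upto K E w n s) + (killed_step K E ^^ Suc n) V s" for n
    unfolding decomp[of n, symmetric] by (intro add_right_mono SUP_upper) simp
  moreover have "(\<lambda>n. (SUP n. expected_weight_upto K E w n s) + (killed_step K E ^^ Suc n) V s)
      \<longlonglongrightarrow> (SUP n. expected_weight_upto K E w n s) + 0"
    using tail by (intro tendsto_add tendsto_const LIMSEQ_Suc)
  ultimately show "V s \<le> (SUP n. expected_weight_upto K E w n s)"
    by (intro LIMSEQ_le_const) auto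
qed

end

lemma square_potential_step:
  fixes q u0 u1 J v :: real
  assumes "0 \<le> q" "q \<le> 1" "0 \<le> u0" "u0 \<le> u1" "u1 \<le> u0 + J"
    and v: "v = 1 + q * u1 + (1 - q) * u0"
  shows "v + (q * (u1\<^sup>2 + J\<^sup>2 * u1) + (1 - q) * (u0\<^sup>2 + J\<^sup>2 * u0)) \<le> v\<^sup>2 + J\<^sup>2 * v"
proof -
  define m where "m = q * u1 + (1 - q) * u0"
  have second_moment: "q * u1\<^sup>2 + (1 - q) * u0\<^sup>2 = m\<^sup>2 + q * (1 - q) * (u1 - u0)\<^sup>2"
    unfolding m_def by (simp add: power2_eq_square algebra_simps)
  have "q * (1 - q) * (u1 - u0)\<^sup>2 \<le> 1 * J\<^sup>2"
    using assms by (intro mult_mono power_mono) (auto simp: mult_le_one)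
  moreover have "0 \<le> m"
    unfolding m_def using assms by simp
  moreover have "v + (q * (u1\<^sup>2 + J\<^sup>2 * u1) + (1 - q) * (u0\<^sup>2 + J\<^sup>2 * u0))
      = 1 + m + (q * u1\<^sup>2 + (1 - q) * u0\<^sup>2) + J\<^sup>2 * m"
    unfolding v m_def by (simp add: algebra_simps)
  moreover have "v\<^sup>2 + J\<^sup>2 * v = 1 + 2 * m + m\<^sup>2 + J\<^sup>2 + J\<^sup>2 * m"
    unfolding v m_def by (simp add: power2_eq_square algebra_simps)
  ultimately show ?thesis
    unfolding second_moment by linarith
qed

lemma exit_state_Nil: "exit_state r [] = Bot"
  by (simp add: exit_state_def)

lemma exit_state_snoc_r: "exit_state r (g @ [r]) = exit_state r g"
  by (simp add: exit_state_def)

lemma exit_state_snoc: "j \<noteq> r \<Longrightarrow> exit_state r (g @ [j]) = S (j + 1) g"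
  by (simp add: exit_state_def)

lemma exit_state_in_exitset: "set g \<subseteq> {1..r} \<Longrightarrow> exit_state r g \<in> exitset r g"
proof (induction g rule: rev_induct)
  case Nil
  then show ?case by (simp add: exit_state_Nil exitset_def)
next
  case (snoc x g)
  show ?case
  proof (cases "x = r")
    case True
    have "exitset r g \<subseteq> exitset r (g @ [x])"
      unfolding exitset_def using prefix_order.less_le_trans[of _ g "g @ [x]"] by auto
    then show ?thesis using True snoc by (auto simp: exit_state_snoc_r)
  next
    case False
    then show ?thesis
      using snoc.prems by (auto simp: exit_state_snoc exitset_def strict_prefix_def)
  qed
qed

locale block_chain =
  fixes r :: nat and pc :: real and p :: "nat \<Rightarrow> real" and a :: "nat list"
  assumes r_pos: "1 \<le> r" and pc_nonneg: "0 \<le> pc" and pc_le_1: "pc \<le> 1"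
    and p_prob: "\<And>i. i \<in> {1..r} \<Longrightarrow> 0 \<le> p i \<and> p i \<le> 1"
    and pc_p_sum_less_1: "pc * (\<Sum>i=1..r. p i) < 1"
    and a_letters: "set a \<subseteq> {1..r}"
begin

abbreviation p_sum :: real where
  "p_sum \<equiv> \<Sum>i=1..r. p i"

text \<open>Here ws is the weight of the states s (the states c weigh 1). block_weight ws is Phi,
  rest_weight ws j the expected weight collected from s_j^g until block g is left, and
  pending_weight ws g that of the unfinished blocks strictly between a and g.\<close>

definition block_weight :: "real \<Rightarrow> real" where
  "block_weight ws = (ws * real r + p_sum) / (1 - pc * p_sum)"

definition rest_weight :: "real \<Rightarrow> nat \<Rightarrow> real" where
  "rest_weight ws j = (\<Sum>i=j..r. ws + p i * (1 + pc * block_weight ws))"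

definition pending_weight :: "real \<Rightarrow> nat list \<Rightarrow> real" where
  "pending_weight ws g = (\<Sum>x\<leftarrow>drop (length a) g. rest_weight ws (x + 1))"

fun potential :: "real \<Rightarrow> state \<Rightarrow> real" where
  "potential ws (S i g) = (if prefix a g then rest_weight ws i + pending_weight ws g else 0)"
| "potential ws (C i g) =
     (if prefix a g then 1 + pc * block_weight ws + rest_weight ws (Suc i) + pending_weight ws g else 0)"
| "potential ws Sharp = 0"
| "potential ws Bot = 0"

definition weight :: "real \<Rightarrow> state \<Rightarrow> real" where
  "weight ws s = (case s of S _ _ \<Rightarrow> ws | _ \<Rightarrow> 1)"

lemma p_nonneg: "i \<in> {1..r} \<Longrightarrow> 0 \<le> p i"
  using p_prob by blast

lemma p_sum_nonneg: "0 \<le> p_sum"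
  by (intro sum_nonneg p_nonneg)

lemma block_weight_nonneg: "0 \<le> ws \<Longrightarrow> 0 \<le> block_weight ws"
  unfolding block_weight_def using pc_p_sum_less_1 p_sum_nonneg by simp

lemma block_weight_mono: "ws \<le> ws' \<Longrightarrow> block_weight ws \<le> block_weight ws'"
  unfolding block_weight_def using pc_p_sum_less_1
  by (intro divide_right_mono add_right_mono mult_right_mono) auto

lemma rest_weight_1: "rest_weight ws (Suc 0) = block_weight ws"
proof -
  have "rest_weight ws 1 = ws * real r + p_sum * (1 + pc * block_weight ws)"
    unfolding rest_weight_def by (simp add: sum.distrib sum_distrib_right)
  moreover have "block_weight ws * (1 - pc * p_sum) = ws * real r + p_sum"
    unfolding block_weight_def using pc_p_sum_less_1 by simp
  ultimately show ?thesis by (simp add: algebra_simps)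
qed

lemma rest_weight_Suc_r: "rest_weight ws (Suc r) = 0"
  by (simp add: rest_weight_def)

lemma rest_weight_step:
  "j \<in> {1..r} \<Longrightarrow> rest_weight ws j = ws + p j * (1 + pc * block_weight ws) + rest_weight ws (Suc j)"
  unfolding rest_weight_def by (simp add: sum.atLeast_Suc_atMost)

lemma rest_weight_nonneg: "0 \<le> ws \<Longrightarrow> 1 \<le> j \<Longrightarrow> 0 \<le> rest_weight ws j"
  unfolding rest_weight_def using block_weight_nonneg[of ws] pc_nonneg
  by (intro sum_nonneg) (simp add: p_nonneg)

lemma rest_weight_mono: "ws \<le> ws' \<Longrightarrow> 1 \<le> j \<Longrightarrow> rest_weight ws j \<le> rest_weight ws' j"
  unfolding rest_weight_def using block_weight_mono[of ws ws'] pc_nonneg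
  by (intro sum_mono add_mono mult_left_mono) (auto simp: p_nonneg)

lemma pending_weight_nonneg: "0 \<le> ws \<Longrightarrow> 0 \<le> pending_weight ws g"
  unfolding pending_weight_def by (intro sum_list_nonneg) (auto intro: rest_weight_nonneg)

lemma pending_weight_mono: "ws \<le> ws' \<Longrightarrow> pending_weight ws g \<le> pending_weight ws' g"
  unfolding pending_weight_def by (intro sum_list_mono) (auto intro: rest_weight_mono)

lemma pending_weight_a: "pending_weight ws a = 0"
  by (simp add: pending_weight_def)

lemma pending_weight_snoc:
  "prefix a g \<Longrightarrow> pending_weight ws (g @ [i]) = pending_weight ws g + rest_weight ws (Suc i)"
  by (simp add: pending_weight_def prefix_length_le)

definition next_slot :: "nat \<Rightarrow> nat list \<Rightarrow> state" where
  "next_slot i g = (if i < r then S (i + 1) g else exit_state r g)"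

fun coin :: "state \<Rightarrow> real" where
  "coin (S i g) = p i"
| "coin (C i g) = pc"
| "coin _ = 0"

fun on_heads :: "state \<Rightarrow> state" where
  "on_heads (S i g) = C i g"
| "on_heads (C i g) = S 1 (g @ [i])"
| "on_heads s = s"

fun on_tails :: "state \<Rightarrow> state" where
  "on_tails (S i g) = next_slot i g"
| "on_tails (C i g) = next_slot i g"
| "on_tails s = s"

definition in_subtree :: "nat \<Rightarrow> nat list \<Rightarrow> bool" where
  "in_subtree i g \<longleftrightarrow> i \<in> {1..r} \<and> prefix a g \<and> set g \<subseteq> {1..r}"

definition subtree_states :: "state set" where
  "subtree_states = {S i g | i g. in_subtree i g} \<union> {C i g | i g. in_subtree i g}"

abbreviation exits :: "state set" where
  "exits \<equiv> exitset r a"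

abbreviation region :: "state set" where
  "region \<equiv> exits \<union> subtree_states"

lemma subtree_states_cases:
  assumes "s \<in> subtree_states"
  obtains i g where "in_subtree i g" and "s = S i g \<or> s = C i g"
  using assms unfolding subtree_states_def by blast

lemma coin_prob: "s \<in> subtree_states \<Longrightarrow> 0 \<le> coin s \<and> coin s \<le> 1"
  by (erule subtree_states_cases) (auto simp: in_subtree_def p_prob pc_nonneg pc_le_1)

lemma kern_subtree_states:
  "s \<in> subtree_states \<Longrightarrow> kern r pc p s = map_pmf (\<lambda>b. if b then on_heads s else on_tails s) (bernoulli_pmf (coin s))"
  by (erule subtree_states_cases) (auto simp: in_subtree_def next_slot_def cong: if_cong)

lemma nn_integral_kern_subtree_states:
  assumes "s \<in> subtree_states"
  shows "(\<integral>\<^sup>+t. f t \<partial>kern r pc p s) = ennreal (coin s) * f (on_heads s) + ennreal (1 - coin s) * f (on_tails s)"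
  using coin_prob[OF assms] by (simp add: kern_subtree_states[OF assms] mult.commute)

lemma set_pmf_kern_subtree_states: "s \<in> subtree_states \<Longrightarrow> set_pmf (kern r pc p s) \<subseteq> {on_heads s, on_tails s}"
  by (auto simp: kern_subtree_states)

lemma potential_exits: "s \<in> exits \<Longrightarrow> potential ws s = 0"
  by (auto simp: exitset_def prefix_order.less_le_not_le)

lemma subtree_states_not_exits: "s \<in> subtree_states \<Longrightarrow> s \<notin> exits"
  by (auto simp: subtree_states_def in_subtree_def exitset_def prefix_order.less_le_not_le)

lemma exit_state_in_region:
  assumes "set b \<subseteq> {1..r}"
  shows "exit_state r (a @ b) \<in> region \<and> potential ws (exit_state r (a @ b)) = pending_weight ws (a @ b)"
  using assms
proof (induction b rule: rev_induct)
  case Nil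
  then show ?case
    using exit_state_in_exitset[OF a_letters] by (simp add: potential_exits pending_weight_a)
next
  case (snoc x b)
  show ?case
  proof (cases "x = r")
    case True
    then show ?thesis
      using snoc exit_state_snoc_r[of r "a @ b"] pending_weight_snoc[of "a @ b" ws x]
      by (simp add: rest_weight_Suc_r)
  next
    case False
    then have "in_subtree (x + 1) (a @ b)"
      using snoc.prems a_letters by (auto simp: in_subtree_def)
    then show ?thesis
      using False exit_state_snoc[of x r "a @ b"] pending_weight_snoc[of "a @ b" ws x]
      by (simp add: subtree_states_def)
  qed
qed

lemma next_slot_in_region:
  assumes "in_subtree i g"
  shows "next_slot i g \<in> region \<and> potential ws (next_slot i g) = rest_weight ws (Suc i) + pending_weight ws g"
proof (cases "i < r")
  case True
  then have "in_subtree (i + 1) g"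
    using assms by (auto simp: in_subtree_def)
  then show ?thesis
    using True assms by (auto simp: next_slot_def subtree_states_def in_subtree_def)
next
  case False
  then have "i = r" using assms by (simp add: in_subtree_def)
  obtain b where "g = a @ b" "set b \<subseteq> {1..r}"
    using assms by (auto simp: in_subtree_def prefix_def)
  then show ?thesis
    using exit_state_in_region[of b ws] \<open>i = r\<close> by (simp add: next_slot_def rest_weight_Suc_r)
qed

lemma coin_successors_in_region:
  assumes "s \<in> subtree_states"
  shows "on_heads s \<in> region" and "on_tails s \<in> region"
proof -
  obtain i g where ig: "in_subtree i g" and s: "s = S i g \<or> s = C i g"
    using assms by (rule subtree_states_cases)
  have "prefix a (g @ [i])" and "set (g @ [i]) \<subseteq> {1..r}"
    using ig by (auto simp: in_subtree_def prefix_def)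
  then show "on_heads s \<in> region"
    using s ig r_pos by (auto simp: subtree_states_def in_subtree_def)
  show "on_tails s \<in> region"
    using s next_slot_in_region[OF ig] by auto
qed

lemma potential_step:
  assumes "s \<in> subtree_states" and "0 \<le> ws"
  shows "potential ws s = weight ws s + coin s * potential ws (on_heads s) + (1 - coin s) * potential ws (on_tails s)"
    and "potential ws (on_tails s) \<le> potential ws (on_heads s)"
    and "potential ws (on_heads s) \<le> potential ws (on_tails s) + 1 + block_weight ws"
proof -
  obtain i g where ig: "in_subtree i g" and s: "s = S i g \<or> s = C i g"
    using assms(1) by (rule subtree_states_cases)
  have tails: "potential ws (on_tails s) = rest_weight ws (Suc i) + pending_weight ws g"
    using s next_slot_in_region[OF ig] by auto
  have a_g: "prefix a g" and i: "i \<in> {1..r}"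
    using ig by (auto simp: in_subtree_def)
  have "0 \<le> block_weight ws" and "pc * block_weight ws \<le> block_weight ws"
    using block_weight_nonneg[OF \<open>0 \<le> ws\<close>] pc_le_1 by (auto simp: mult_left_le_one_le pc_nonneg)
  moreover have "rest_weight ws i = ws + p i * (1 + pc * block_weight ws) + rest_weight ws (Suc i)"
    using rest_weight_step[OF i] .
  moreover have "potential ws (S 1 (g @ [i])) = block_weight ws + rest_weight ws (Suc i) + pending_weight ws g"
    using a_g prefix_snoc[of a g i] by (simp add: pending_weight_snoc rest_weight_1)
  ultimately show "potential ws s = weight ws s + coin s * potential ws (on_heads s) + (1 - coin s) * potential ws (on_tails s)"
    and "potential ws (on_tails s) \<le> potential ws (on_heads s)"
    and "potential ws (on_heads s) \<le> potential ws (on_tails s) + 1 + block_weight ws"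
    using s tails a_g pc_nonneg by (auto simp: weight_def algebra_simps)
qed

lemma potential_nonneg: "s \<in> region \<Longrightarrow> 0 \<le> ws \<Longrightarrow> 0 \<le> potential ws s"
  using block_weight_nonneg[of ws] rest_weight_nonneg[of ws] pending_weight_nonneg[of ws] pc_nonneg
  by (auto simp: potential_exits subtree_states_def in_subtree_def)

lemma potential_mono: "s \<in> region \<Longrightarrow> ws \<le> ws' \<Longrightarrow> potential ws s \<le> potential ws' s"
  using block_weight_mono[of ws ws'] rest_weight_mono[of ws ws'] pending_weight_mono[of ws ws'] pc_nonneg
  by (auto simp: potential_exits subtree_states_def in_subtree_def intro!: add_mono mult_left_mono)

lemma killed_step_kern:
  assumes "s \<in> subtree_states" and "\<And>t. t \<in> region \<Longrightarrow> 0 \<le> f t"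
  shows "killed_step (kern r pc p) exits (\<lambda>t. ennreal (f t)) s
       = ennreal (coin s * f (on_heads s) + (1 - coin s) * f (on_tails s))"
  using coin_prob[OF assms(1)] assms(2)[OF coin_successors_in_region(1)[OF assms(1)]]
    assms(2)[OF coin_successors_in_region(2)[OF assms(1)]] subtree_states_not_exits[OF assms(1)]
  by (simp add: killed_step_def nn_integral_kern_subtree_states[OF assms(1)] ennreal_mult)

lemma potential_harmonic:
  assumes "s \<in> region" and "0 \<le> ws"
    and w_S: "\<And>i g. w (S i g) = ennreal ws" and w_C: "\<And>i g. w (C i g) = 1"
  shows "ennreal (potential ws s)
       = (if s \<in> exits then 0 else w s) + killed_step (kern r pc p) exits (\<lambda>t. ennreal (potential ws t)) s"
proof (cases "s \<in> exits")
  case True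
  then show ?thesis by (simp add: potential_exits killed_step_def)
next
  case False
  then have s: "s \<in> subtree_states" using assms(1) by simp
  have "w s = ennreal (weight ws s)"
    using s by (rule subtree_states_cases) (auto simp: weight_def w_S w_C)
  moreover have "0 \<le> weight ws s" and "0 \<le> coin s * potential ws (on_heads s) + (1 - coin s) * potential ws (on_tails s)"
    using \<open>0 \<le> ws\<close> coin_prob[OF s] potential_nonneg[OF coin_successors_in_region(1)[OF s]]
      potential_nonneg[OF coin_successors_in_region(2)[OF s]]
    by (auto simp: weight_def split: state.split)
  moreover have "killed_step (kern r pc p) exits (\<lambda>t. ennreal (potential ws t)) s
      = ennreal (coin s * potential ws (on_heads s) + (1 - coin s) * potential ws (on_tails s))"
    using s by (rule killed_step_kern) (rule potential_nonneg[OF _ \<open>0 \<le> ws\<close>])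
  ultimately show ?thesis
    using False potential_step(1)[OF s \<open>0 \<le> ws\<close>] by (simp add: add.assoc flip: ennreal_plus)
qed

text \<open>The supersolution of the second-moment bound; its finiteness makes the tails vanish.\<close>

definition square_potential :: "state \<Rightarrow> real" where
  "square_potential t = (potential 1 t)\<^sup>2 + (1 + block_weight 1)\<^sup>2 * potential 1 t"

lemma square_potential_supersolution:
  assumes "s \<in> region" and "0 \<le> ws" and "ws \<le> 1"
  shows "ennreal (potential ws s) + killed_step (kern r pc p) exits (\<lambda>t. ennreal (square_potential t)) s
       \<le> ennreal (square_potential s)"
proof (cases "s \<in> exits")
  case True
  then show ?thesis by (simp add: potential_exits killed_step_def)
next
  case False
  then have s: "s \<in> subtree_states" using assms(1) by simp
  have nonneg: "0 \<le> square_potential t" if "t \<in> region" for t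
    using potential_nonneg[OF that, of 1] by (simp add: square_potential_def)
  note step = potential_step[OF s, of 1]
  have "weight 1 s = 1" by (simp add: weight_def split: state.split)
  then have "potential 1 s + (coin s * square_potential (on_heads s) + (1 - coin s) * square_potential (on_tails s))
      \<le> square_potential s"
    unfolding square_potential_def
    using coin_prob[OF s] potential_nonneg[OF coin_successors_in_region(2)[OF s]] step
    by (intro square_potential_step) auto
  moreover have "potential ws s \<le> potential 1 s"
    using assms by (intro potential_mono) auto
  moreover have "killed_step (kern r pc p) exits (\<lambda>t. ennreal (square_potential t)) s
      = ennreal (coin s * square_potential (on_heads s) + (1 - coin s) * square_potential (on_tails s))"
    using s nonneg by (rule killed_step_kern)
  moreover have "0 \<le> coin s * square_potential (on_heads s) + (1 - coin s) * square_potential (on_tails s)"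
    using coin_prob[OF s] nonneg coin_successors_in_region[OF s] by simp
  ultimately show ?thesis
    using potential_nonneg[OF assms(1,2)] by (simp flip: ennreal_plus)
qed

lemma SUP_expected_weight_upto_block_weight:
  assumes "0 \<le> ws" and "ws \<le> 1"
    and w_S: "\<And>i g. w (S i g) = ennreal ws" and w_C: "\<And>i g. w (C i g) = 1"
  shows "(SUP n. expected_weight_upto (kern r pc p) exits w n (S 1 a)) = ennreal (block_weight ws)"
proof -
  have start: "S 1 a \<in> region"
    using r_pos a_letters by (auto simp: subtree_states_def in_subtree_def)
  have closed: "set_pmf (kern r pc p s) \<subseteq> region" if "s \<in> region" "s \<notin> exits" for s
    using that set_pmf_kern_subtree_states coin_successors_in_region by blast
  note harmonic = potential_harmonic[OF _ \<open>0 \<le> ws\<close> w_S w_C]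
  have "(\<lambda>n. (killed_step (kern r pc p) exits ^^ n) (\<lambda>t. ennreal (potential ws t)) (S 1 a)) \<longlonglongrightarrow> 0"
    using closed square_potential_supersolution assms(1,2) start
    by (intro killed_step_pow_tendsto_0[where G = region and Q = "\<lambda>t. ennreal (square_potential t)"]) auto
  then have "(SUP n. expected_weight_upto (kern r pc p) exits w n (S 1 a)) = ennreal (potential ws (S 1 a))"
    using closed harmonic start by (intro SUP_expected_weight_upto_eq[where G = region]) auto
  then show ?thesis
    by (simp add: pending_weight_a rest_weight_1)
qed

end

theorem theorem3p4:
  fixes r :: nat and pc :: real and p :: "nat \<Rightarrow> real" and a :: "nat list"
  assumes "r \<ge> 1"
    and "0 \<le> pc" and "pc \<le> 1"
    and "\<And>i. 1 \<le> i \<Longrightarrow> i \<le> r \<Longrightarrow> 0 \<le> p i \<and> p i \<le> 1"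
    and "pc < 1"
    and "pc * real r * Max (p ` {1..r}) < 1"
    and "set a \<subseteq> {1..r}"
  shows "ExpO r pc p (S 1 a) = ennreal ((\<Sum>i=1..r. p i) / (1 - pc * (\<Sum>i=1..r. p i))) \<and>
         ExpN r pc p (S 1 a) = ennreal ((real r + (\<Sum>i=1..r. p i)) / (1 - pc * (\<Sum>i=1..r. p i)))"
proof -
  have "(\<Sum>i=1..r. p i) \<le> real r * Max (p ` {1..r})"
    using sum_bounded_above[of "{1..r}" p "Max (p ` {1..r})"] by simp
  then have "pc * (\<Sum>i=1..r. p i) \<le> pc * real r * Max (p ` {1..r})"
    using assms(2) by (simp add: mult_left_mono mult.assoc)
  then have "pc * (\<Sum>i=1..r. p i) < 1"
    using assms(6) by linarith
  then interpret block_chain r pc p a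
    using assms by unfold_locales auto
  have "ExpO r pc p (S 1 a)
      = (SUP n. expected_weight_upto (kern r pc p) exits (\<lambda>x. if is_output x then 1 else 0) n (S 1 a))"
    unfolding ExpO_def ennreal_length_eq_sum_list
    by (simp add: expected_weight_upto_def weight_before_def sum_list_map_filter')
  also have "\<dots> = ennreal (block_weight 0)"
    by (rule SUP_expected_weight_upto_block_weight) simp_all
  finally have "ExpO r pc p (S 1 a) = ennreal (block_weight 0)" .
  moreover have "ExpN r pc p (S 1 a) = (SUP n. expected_weight_upto (kern r pc p) exits (\<lambda>_. 1) n (S 1 a))"
    unfolding ExpN_def ennreal_length_eq_sum_list by (simp add: expected_weight_upto_def weight_before_def)
  moreover have "\<dots> = ennreal (block_weight 1)"
    by (rule SUP_expected_weight_upto_block_weight) simp_all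
  ultimately show ?thesis
    by (simp add: block_weight_def)
qed

end
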